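(* Let $\upsilon$ be a positive integer, $n$ a nonnegative integer, and $p,q$ real parameters with $q>-1$. Then $y=M_n(p,q,\upsilon;x)$ satisfies $$\Big[xD\,(xD+q+1-\upsilon)_{\upsilon}-(-x)^{\upsilon}(xD-\upsilon n)(xD+n+1-p)_{\upsilon}\Big]y=0,$$ where $D=\frac{d}{dx}$ and, for an operator $T$ and constant $c$, $(T+c)_{\upsilon}=\prod_{k=0}^{\upsilon-1}(T+c+k)$.
   Context: $(a)_k=a(a+1)\cdots(a+k-1)$, $(a)_0=1$, denotes the Pochhammer symbol. For a positive integer $\upsilon$, a nonnegative integer $n$ and real parameters $p,q$ define $$M_n(p,q,\upsilon;x)=(-1)^n(q+1)_{\upsilon n}\sum_{j=0}^{n}(-1)^j\binom{n}{j}\frac{(n+1-p)_{\upsilon j}}{(q+1)_{\upsilon j}}(-x)^{\upsilon j}.$$ *)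

theory Defs
  imports "HOL-Analysis.Analysis"
begin

definition M :: "nat \<Rightarrow> real \<Rightarrow> real \<Rightarrow> nat \<Rightarrow> real \<Rightarrow> real" where
  "M n p q v x = (-1) ^ n * pochhammer (q + 1) (v * n) *
     (\<Sum>j = 0..n. (-1) ^ j * real (n choose j) *
        (pochhammer (real n + 1 - p) (v * j) / pochhammer (q + 1) (v * j)) * (- x) ^ (v * j))"

definition theta :: "(real \<Rightarrow> real) \<Rightarrow> real \<Rightarrow> real" where
  "theta f = (\<lambda>x. x * deriv f x)"

text \<open>Operator Pochhammer symbol (theta + c)_k = prod_{i<k} (theta + c + i);
  the factors commute, we apply them in the order i = 0, 1, ..., k-1.\<close>
fun theta_poch :: "real \<Rightarrow> nat \<Rightarrow> (real \<Rightarrow> real) \<Rightarrow> real \<Rightarrow> real" where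
  "theta_poch c 0 f = f"
| "theta_poch c (Suc k) f =
     (let g = theta_poch c k f in (\<lambda>x. theta g x + (c + real k) * g x))"

end

theory Submission
  imports Defs
begin

text \<open>Write M as the sum over \<open>j \<le> n\<close> of \<open>c j * x ^ (v * j)\<close>. The Euler operator \<open>\<theta> = x D\<close>
  acts diagonally on monomials, \<open>\<theta> x^e = e x^e\<close>, so \<open>(\<theta> + c)_v x^e = (c + e)_v x^e\<close>. In the
  first operator term the summand \<open>j = 0\<close> is killed by \<open>\<theta>\<close>, in the second the summand \<open>j = n\<close>
  is killed by \<open>\<theta> - v n\<close>, and the factor \<open>(-x)^v\<close> shifts the index by one. The equation
  thus reduces to a two-term recurrence for the \<open>c j\<close>, which follows from
  \<open>(j + 1) C(n, j + 1) = (n - j) C(n, j)\<close> and \<open>(a)_(v(j+1)) = (a)_(v j) (a + v j)_v\<close>. The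
  hypothesis \<open>q > -1\<close> keeps the Pochhammer symbols of \<open>q + 1\<close> nonzero.\<close>

lemma theta_monomial_sum:
  assumes "finite A"
  shows "theta (\<lambda>x. \<Sum>j\<in>A. c j * x ^ e j) = (\<lambda>x. \<Sum>j\<in>A. c j * real (e j) * x ^ e j)"
proof
  fix x :: real
  have "((\<lambda>x. \<Sum>j\<in>A. c j * x ^ e j) has_field_derivative
          (\<Sum>j\<in>A. c j * (real (e j) * x ^ (e j - 1)))) (at x)"
    by (rule DERIV_sum) (auto intro!: derivative_eq_intros)
  then have "theta (\<lambda>x. \<Sum>j\<in>A. c j * x ^ e j) x
      = (\<Sum>j\<in>A. x * (c j * (real (e j) * x ^ (e j - 1))))"
    unfolding theta_def by (simp add: DERIV_imp_deriv sum_distrib_left)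
  also have "\<dots> = (\<Sum>j\<in>A. c j * real (e j) * x ^ e j)"
    by (rule sum.cong) (auto simp: power_eq_if)
  finally show "theta (\<lambda>x. \<Sum>j\<in>A. c j * x ^ e j) x = (\<Sum>j\<in>A. c j * real (e j) * x ^ e j)" .
qed

lemma theta_poch_monomial_sum:
  assumes "finite A"
  shows "theta_poch c k (\<lambda>x. \<Sum>j\<in>A. a j * x ^ e j)
       = (\<lambda>x. \<Sum>j\<in>A. a j * pochhammer (c + real (e j)) k * x ^ e j)"
proof (induction k)
  case 0
  show ?case by simp
next
  case (Suc k)
  show ?case
    by (simp only: theta_poch.simps Let_def Suc.IH theta_monomial_sum[OF assms])
       (simp add: sum_distrib_left sum.distrib[symmetric] pochhammer_Suc algebra_simps)
qed

definition M_coeff :: "nat \<Rightarrow> real \<Rightarrow> real \<Rightarrow> nat \<Rightarrow> nat \<Rightarrow> real" where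
  "M_coeff n p q v j = (-1) ^ n * pochhammer (q + 1) (v * n) * (-1) ^ j * real (n choose j) *
     (pochhammer (real n + 1 - p) (v * j) / pochhammer (q + 1) (v * j)) * (-1) ^ (v * j)"

lemma M_eq_monomial_sum: "M n p q v = (\<lambda>x. \<Sum>j\<le>n. M_coeff n p q v j * x ^ (v * j))"
proof
  fix x :: real
  show "M n p q v x = (\<Sum>j\<le>n. M_coeff n p q v j * x ^ (v * j))"
    unfolding M_def M_coeff_def atLeast0AtMost sum_distrib_left
    by (rule sum.cong) (simp_all add: power_minus[of x] mult.assoc)
qed

lemma of_nat_choose_Suc_mult:
  assumes "j < n"
  shows "real (n choose Suc j) * (real j + 1) = real (n choose j) * (real n - real j)"
proof -
  have "Suc j * (n choose Suc j) = (n - j) * (n choose j)"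
    by (metis binomial_absorb_comp binomial_absorption)
  then have "real (Suc j * (n choose Suc j)) = real ((n - j) * (n choose j))" by simp
  then show ?thesis using assms by (simp add: of_nat_diff algebra_simps)
qed

lemma M_coeff_recurrence:
  assumes "q > -1" and "j < n"
  shows "M_coeff n p q v (Suc j) * pochhammer (q + 1 + real (v * j)) v * real (v * Suc j)
       = (-1) ^ v * M_coeff n p q v j * pochhammer (real n + 1 - p + real (v * j)) v
           * (real (v * j) - real (v * n))"
proof -
  define F where "F = pochhammer (real n + 1 - p) (v * j) / pochhammer (q + 1) (v * j)"
  define R where "R = pochhammer (real n + 1 - p + real (v * j)) v"
  define P where "P = pochhammer (q + 1 + real (v * j)) v"
  define K where "K = (-1::real) ^ n * pochhammer (q + 1) (v * n)"
  have "q + 1 + real (v * j) > 0"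
    using assms(1) by (simp add: add_pos_nonneg)
  then have "P \<noteq> 0"
    unfolding P_def by (metis pochhammer_pos less_irrefl)
  have "v * Suc j = v * j + v" by simp
  then have "M_coeff n p q v (Suc j)
      = K * (-1) ^ Suc j * real (n choose Suc j) * (F * (R / P)) * ((-1) ^ (v * j) * (-1) ^ v)"
    unfolding M_coeff_def F_def R_def P_def K_def
    by (simp only: pochhammer_product' power_add of_nat_add times_divide_times_eq)
  then have "M_coeff n p q v (Suc j) * P * real (v * Suc j)
      = - ((-1) ^ v * K * (-1) ^ j * (real (n choose Suc j) * (real j + 1)) * F
           * (-1) ^ (v * j) * R * real v)"
    using \<open>P \<noteq> 0\<close> by (simp add: algebra_simps)
  also have "\<dots> = (-1) ^ v * (K * (-1) ^ j * real (n choose j) * F * (-1) ^ (v * j)) * R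
                     * (real (v * j) - real (v * n))"
    unfolding of_nat_choose_Suc_mult[OF assms(2)] by (simp add: algebra_simps)
  also have "K * (-1) ^ j * real (n choose j) * F * (-1) ^ (v * j) = M_coeff n p q v j"
    unfolding M_coeff_def K_def F_def by simp
  finally show ?thesis
    unfolding P_def R_def .
qed

lemma theta_poch_M:
  "theta_poch c k (M n p q v)
   = (\<lambda>x. \<Sum>j\<le>n. M_coeff n p q v j * pochhammer (c + real (v * j)) k * x ^ (v * j))"
  unfolding M_eq_monomial_sum by (rule theta_poch_monomial_sum) simp

lemma theta_theta_poch_M_eq_sum:
  "theta (theta_poch (q + 1 - real v) v (M n p q v)) x
   = (\<Sum>j<n. M_coeff n p q v (Suc j) * pochhammer (q + 1 + real (v * j)) v * real (v * Suc j)
              * x ^ (v * Suc j))"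
proof -
  have "theta (theta_poch (q + 1 - real v) v (M n p q v)) x
      = (\<Sum>j\<le>n. M_coeff n p q v j * pochhammer (q + 1 - real v + real (v * j)) v * real (v * j)
                 * x ^ (v * j))"
    unfolding theta_poch_M theta_monomial_sum[OF finite_atMost] ..
  also have "\<dots> = (\<Sum>j<n. M_coeff n p q v (Suc j) * pochhammer (q + 1 + real (v * j)) v
                       * real (v * Suc j) * x ^ (v * Suc j))"
    unfolding lessThan_Suc_atMost[symmetric] sum.lessThan_Suc_shift
    by (simp add: algebra_simps)
  finally show ?thesis .
qed

lemma theta_poch_M_euler_eq_sum:
  "theta (theta_poch (real n + 1 - p) v (M n p q v)) x
     - real (v * n) * theta_poch (real n + 1 - p) v (M n p q v) x
   = (\<Sum>j<n. M_coeff n p q v j * pochhammer (real n + 1 - p + real (v * j)) v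
              * (real (v * j) - real (v * n)) * x ^ (v * j))"
  unfolding theta_poch_M theta_monomial_sum[OF finite_atMost]
  unfolding lessThan_Suc_atMost[symmetric]
  by (simp add: sum.lessThan_Suc sum_distrib_left sum_subtractf[symmetric] algebra_simps)

theorem mainTheorem6:
  fixes v n :: nat and p q :: real
  assumes "v > 0" and "q > -1"
  shows "\<forall>x. theta (theta_poch (q + 1 - real v) v (M n p q v)) x
           - (- x) ^ v * (theta (theta_poch (real n + 1 - p) v (M n p q v)) x
                          - real (v * n) * theta_poch (real n + 1 - p) v (M n p q v) x) = 0"
proof
  fix x :: real
  have term_shift: "(- x) ^ v * (M_coeff n p q v j * pochhammer (real n + 1 - p + real (v * j)) v
                      * (real (v * j) - real (v * n)) * x ^ (v * j))
      = M_coeff n p q v (Suc j) * pochhammer (q + 1 + real (v * j)) v * real (v * Suc j)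
          * x ^ (v * Suc j)" if "j < n" for j
  proof -
    have "(- x) ^ v * x ^ (v * j) = (-1) ^ v * x ^ (v * Suc j)"
      by (simp add: power_minus[of x] power_add mult_ac)
    then show ?thesis
      unfolding M_coeff_recurrence[OF assms(2) that] by (simp add: mult_ac)
  qed
  have "(- x) ^ v * (theta (theta_poch (real n + 1 - p) v (M n p q v)) x
                - real (v * n) * theta_poch (real n + 1 - p) v (M n p q v) x)
      = theta (theta_poch (q + 1 - real v) v (M n p q v)) x"
    unfolding theta_poch_M_euler_eq_sum theta_theta_poch_M_eq_sum sum_distrib_left
    using term_shift by (intro sum.cong) simp_all
  then show "theta (theta_poch (q + 1 - real v) v (M n p q v)) x
           - (- x) ^ v * (theta (theta_poch (real n + 1 - p) v (M n p q v)) x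
                          - real (v * n) * theta_poch (real n + 1 - p) v (M n p q v) x) = 0"
    by simp
qed

end
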